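(* Let $N=\{1,\dots,n\}$ and $C:2^N\to\mathbb{R}_{\ge0}$. If $\psi\in\mathbb{R}^n$ is in the core of $C$, i.e. $\sum_{i\in N}\psi_i=C(N)$ and $\sum_{i\in S}\psi_i\le C(S)$ for all $S\subseteq N$, then $\|\psi\|_1\le2\max_{S\subseteq N}|C(S)|$. *)

theory Defs
  imports Complex_Main
begin

definition in_core :: "nat \<Rightarrow> (nat set \<Rightarrow> real) \<Rightarrow> (nat \<Rightarrow> real) \<Rightarrow> bool" where
  "in_core n C psi \<longleftrightarrow>
     (\<Sum>i\<in>{1..n}. psi i) = C {1..n} \<and>
     (\<forall>S. S \<subseteq> {1..n} \<longrightarrow> (\<Sum>i\<in>S. psi i) \<le> C S)"

end

theory Submission
  imports Defs
begin

text \<open>Let \<open>P\<close> be the players with nonnegative payoff. Since \<open>\<psi>\<close> sums to \<open>C(N) \<ge> 0\<close>,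
  the negative payoffs are outweighed by those in \<open>P\<close>, so
  \<open>\<parallel>\<psi>\<parallel>\<^sub>1 = 2 \<psi>(P) - C(N) \<le> 2 \<psi>(P) \<le> 2 C(P)\<close> by the core condition for the coalition \<open>P\<close>.\<close>

lemma sum_abs_eq_twice_sum_nonneg_minus_sum:
  fixes f :: "'a \<Rightarrow> 'b::linordered_idom"
  assumes "finite A"
  shows "(\<Sum>i\<in>A. \<bar>f i\<bar>) = 2 * (\<Sum>i\<in>{i\<in>A. f i \<ge> 0}. f i) - (\<Sum>i\<in>A. f i)"
proof -
  let ?P = "{i\<in>A. f i \<ge> 0}" and ?Q = "{i\<in>A. \<not> f i \<ge> 0}"
  have split: "sum g A = sum g ?P + sum g ?Q" for g :: "'a \<Rightarrow> 'b"
  proof -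
    have "A = ?P \<union> ?Q" by auto
    then show ?thesis using assms by (metis (no_types, lifting) sum.union_disjoint
        finite_Un disjoint_iff mem_Collect_eq)
  qed
  have "(\<Sum>i\<in>?P. \<bar>f i\<bar>) = (\<Sum>i\<in>?P. f i)" by (rule sum.cong) auto
  moreover have "(\<Sum>i\<in>?Q. \<bar>f i\<bar>) = - (\<Sum>i\<in>?Q. f i)"
    unfolding sum_negf[symmetric] by (rule sum.cong) auto
  ultimately show ?thesis
    using split[of f] split[of "\<lambda>i. \<bar>f i\<bar>"] by (simp add: algebra_simps)
qed

lemma core_sum_abs_le:
  assumes core: "in_core n C psi" and "C {1..n} \<ge> 0"
  shows "(\<Sum>i\<in>{1..n}. \<bar>psi i\<bar>) \<le> 2 * C {i\<in>{1..n}. psi i \<ge> 0}"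
proof -
  let ?P = "{i\<in>{1..n}. psi i \<ge> 0}"
  have "(\<Sum>i\<in>{1..n}. \<bar>psi i\<bar>) = 2 * (\<Sum>i\<in>?P. psi i) - C {1..n}"
    using core by (simp add: sum_abs_eq_twice_sum_nonneg_minus_sum in_core_def)
  also have "\<dots> \<le> 2 * (\<Sum>i\<in>?P. psi i)"
    using \<open>C {1..n} \<ge> 0\<close> by simp
  also have "\<dots> \<le> 2 * C ?P"
    using core unfolding in_core_def by (simp add: subset_iff)
  finally show ?thesis .
qed

theorem lemma2:
  fixes n :: nat and C :: "nat set \<Rightarrow> real" and psi :: "nat \<Rightarrow> real"
  assumes nonneg: "\<And>S. S \<subseteq> {1..n} \<Longrightarrow> C S \<ge> 0"
    and core: "in_core n C psi"
  shows "(\<Sum>i\<in>{1..n}. \<bar>psi i\<bar>) \<le> 2 * (MAX S \<in> Pow {1..n}. \<bar>C S\<bar>)"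
proof -
  let ?P = "{i\<in>{1..n}. psi i \<ge> 0}"
  have "(\<Sum>i\<in>{1..n}. \<bar>psi i\<bar>) \<le> 2 * C ?P"
    using core nonneg[of "{1..n}"] by (rule core_sum_abs_le) simp
  also have "C ?P \<le> (MAX S \<in> Pow {1..n}. \<bar>C S\<bar>)"
    by (rule order_trans[OF abs_ge_self Max_ge]) auto
  finally show ?thesis by simp
qed

end
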